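(* Under the same setting as the fixed-time observer but with $c_3=0$, i.e. with the observer $$\dot\eta_i=S\eta_i-c_1y_i-c_2\,\mathrm{sig}^a(y_i),\qquad y_i=\sum_{j=0}^Na_{ij}(\eta_i-\eta_j),\quad i=1,\dots,N,$$ and leader $\dot\eta_0=S\eta_0$, suppose $\mathcal G$ contains a spanning tree rooted at node $0$, $0<a<1$, $c_1>\|D\otimes S\|$ and $c_2>0$, where $D$ is a positive definite diagonal matrix with $H^TD+DH\ge 2I_N$. Then there exists a settling-time function $T_1(\eta(0))\ge0$ such that for every $\eta(0)\in\mathbb{R}^{(N+1)n}$, $\lim_{t\to T_1}(\eta_i(t)-\eta_0(t))=0$ and $\eta_i(t)-\eta_0(t)=0$ for all $t\ge T_1(\eta(0))$, $i=1,\dots,N$.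
   Context: Nodes $0,1,\dots,N$ form a digraph $\mathcal G$ with node $0$ the leader; weights $a_{ii}=0$, $a_{ij}>0$ if there is an edge from $j$ to $i$, $a_{ij}=0$ otherwise. $H=[h_{ij}]_{i,j=1}^N$ with $h_{ii}=\sum_{j=0}^Na_{ij}$, $h_{ij}=-a_{ij}$ ($i\neq j$). For $x\in\mathbb{R}^n$ and $a>0$, $\mathrm{sig}^a(x)=[\mathrm{sign}(x_1)|x_1|^a,\dots,\mathrm{sign}(x_n)|x_n|^a]^T$. $\|\cdot\|$ denotes the spectral norm, $\otimes$ the Kronecker product. *)

theory Defs
  imports "HOL-Analysis.Analysis"
begin

text \<open>Nodes: the leader 0 and the followers, indexed by a finite type 'f (so N = CARD('f)).
  Weights among followers: a i j (edge from j to i); weights from the leader: b i = a_{i0}.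
  State dimension n = CARD('n).\<close>

definition sig :: "real \<Rightarrow> real^'n \<Rightarrow> real^'n" where
  "sig e x = (\<chi> k. sgn (x$k) * \<bar>x$k\<bar> powr e)"

definition kron :: "real^'f^'f \<Rightarrow> real^'n^'n \<Rightarrow> real^('f \<times> 'n)^('f \<times> 'n)" where
  "kron A B = (\<chi> p q. A$(fst p)$(fst q) * B$(snd p)$(snd q))"

definition Hmat :: "('f::finite \<Rightarrow> 'f \<Rightarrow> real) \<Rightarrow> ('f \<Rightarrow> real) \<Rightarrow> real^'f^'f" where
  "Hmat a b = (\<chi> i j. if i = j then b i + (\<Sum>k\<in>UNIV. a i k) else - a i j)"

inductive reach_from_leader :: "('f \<Rightarrow> 'f \<Rightarrow> real) \<Rightarrow> ('f \<Rightarrow> real) \<Rightarrow> 'f \<Rightarrow> bool"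
  for a b where
  leader_edge: "b i > 0 \<Longrightarrow> reach_from_leader a b i"
| follower_edge: "reach_from_leader a b j \<Longrightarrow> a i j > 0 \<Longrightarrow> reach_from_leader a b i"

definition has_spanning_tree_from_leader :: "('f \<Rightarrow> 'f \<Rightarrow> real) \<Rightarrow> ('f \<Rightarrow> real) \<Rightarrow> bool" where
  "has_spanning_tree_from_leader a b \<longleftrightarrow> (\<forall>i. reach_from_leader a b i)"

definition yout :: "('f::finite \<Rightarrow> 'f \<Rightarrow> real) \<Rightarrow> ('f \<Rightarrow> real) \<Rightarrow> real^'n \<Rightarrow> ('f \<Rightarrow> real^'n) \<Rightarrow> 'f \<Rightarrow> real^'n" where
  "yout a b x0 x i = b i *\<^sub>R (x i - x0) + (\<Sum>j\<in>UNIV. a i j *\<^sub>R (x i - x j))"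

definition observer_solution ::
  "('f::finite \<Rightarrow> 'f \<Rightarrow> real) \<Rightarrow> ('f \<Rightarrow> real) \<Rightarrow> real^'n^'n \<Rightarrow> real \<Rightarrow> real \<Rightarrow> real \<Rightarrow>
   (real \<Rightarrow> real^'n) \<Rightarrow> ('f \<Rightarrow> real \<Rightarrow> real^'n) \<Rightarrow> bool" where
  "observer_solution a b S c1 c2 e eta0 eta \<longleftrightarrow>
     (\<forall>t\<ge>0. (eta0 has_vector_derivative (S *v eta0 t)) (at t within {0..})) \<and>
     (\<forall>i. \<forall>t\<ge>0. (eta i has_vector_derivative
         (S *v eta i t - c1 *\<^sub>R yout a b (eta0 t) (\<lambda>j. eta j t) i
                       - c2 *\<^sub>R sig e (yout a b (eta0 t) (\<lambda>j. eta j t) i))) (at t within {0..}))"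

end

theory Submission
  imports Defs
begin

text \<open>Along a solution the stacked outputs \<open>y\<^sub>i = \<Sum>\<^sub>j a\<^sub>i\<^sub>j (\<eta>\<^sub>i - \<eta>\<^sub>j)\<close> obey
  \<open>y' = (I \<otimes> S) y - (H \<otimes> I) g(y)\<close>, where \<open>g(s) = c\<^sub>1 s + c\<^sub>2 sig\<^sup>e(s)\<close> acts componentwise.
  With \<open>G\<close> the primitive of \<open>g\<close>, the Lyapunov function \<open>V = \<Sum>\<^sub>i d\<^sub>i \<Sum>\<^sub>k G(y\<^sub>i\<^sub>k)\<close> satisfies
  \<open>V' \<le> -(1 - \<parallel>D \<otimes> S\<parallel> / c\<^sub>1) \<bar>g(y)\<bar>\<^sup>2\<close>. On the sublevel set \<open>V \<le> V(0)\<close> one has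
  \<open>G(s) \<le> C \<bar>s\<bar>\<^bsup>1+e\<^esup>\<close> and \<open>g(s)\<^sup>2 \<ge> c\<^sub>2\<^sup>2 \<bar>s\<bar>\<^bsup>2e\<^esup>\<close>, hence \<open>V' \<le> -\<kappa> V\<^bsup>2e/(1+e)\<^esup>\<close>, and \<open>V\<close>
  vanishes in finite time. \<open>V = 0\<close> forces \<open>y = 0\<close>, and \<open>H\<close> is nonsingular because
  \<open>H\<^sup>T D + D H \<ge> 2 I\<close>, so all followers agree with the leader.\<close>

definition obs_gain :: "real \<Rightarrow> real \<Rightarrow> real \<Rightarrow> real \<Rightarrow> real" where
  "obs_gain c1 c2 e s = c1 * s + c2 * (sgn s * \<bar>s\<bar> powr e)"

definition obs_potential :: "real \<Rightarrow> real \<Rightarrow> real \<Rightarrow> real \<Rightarrow> real" where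
  "obs_potential c1 c2 e s = c1 * s\<^sup>2 / 2 + c2 * \<bar>s\<bar> powr (1 + e) / (1 + e)"

lemma has_real_derivative_abs_powr:
  fixes a x :: real
  assumes "0 < a"
  shows "((\<lambda>y. \<bar>y\<bar> powr (1 + a)) has_real_derivative (1 + a) * (sgn x * \<bar>x\<bar> powr a)) (at x)"
proof -
  consider "x = 0" | "x > 0" | "x < 0" by linarith
  then show ?thesis
  proof cases
    case 1
    have "((\<lambda>h. \<bar>h\<bar> powr a) \<longlongrightarrow> \<bar>0::real\<bar> powr a) (at 0)"
      using assms by (intro tendsto_intros) auto
    moreover have "\<forall>\<^sub>F h in at 0. \<bar>h\<bar> powr a = norm ((\<bar>0 + h\<bar> powr (1 + a) - \<bar>0::real\<bar> powr (1 + a)) / h)"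
      by (auto simp: eventually_at_filter powr_add abs_divide)
    ultimately have "((\<lambda>h. norm ((\<bar>0 + h\<bar> powr (1 + a) - \<bar>0::real\<bar> powr (1 + a)) / h)) \<longlongrightarrow> 0) (at 0)"
      using assms by (simp add: tendsto_cong)
    then show ?thesis
      using 1 by (simp add: DERIV_def tendsto_norm_zero_cancel)
  next
    case 2
    have d: "((\<lambda>y. y powr (1 + a)) has_real_derivative (1 + a) * x powr a) (at x)"
      using has_real_derivative_powr[OF 2, of "1 + a"] by simp
    show ?thesis
      by (rule has_field_derivative_transform_within_open[OF _ open_greaterThan[of 0]])
         (use d 2 in auto)
  next
    case 3
    have "((\<lambda>y. - y) has_real_derivative -1) (at x)"
      by (auto intro!: derivative_eq_intros)
    then have d: "((\<lambda>y. (- y) powr (1 + a)) has_real_derivative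
                    (1 + a) * (- x) powr (1 + a - of_nat 1) * (-1)) (at x)"
      by (rule DERIV_fun_powr) (use 3 in simp)
    show ?thesis
      by (rule has_field_derivative_transform_within_open[OF _ open_lessThan[of 0]])
         (use d 3 in auto)
  qed
qed

lemma has_real_derivative_obs_potential:
  assumes "0 < e"
  shows "(obs_potential c1 c2 e has_real_derivative obs_gain c1 c2 e s) (at s)"
proof -
  have "((\<lambda>s. c1 * s\<^sup>2 / 2 + c2 * \<bar>s\<bar> powr (1 + e) / (1 + e)) has_real_derivative
          c1 * s + c2 * ((1 + e) * (sgn s * \<bar>s\<bar> powr e)) / (1 + e)) (at s)"
    by (intro DERIV_add DERIV_cdivide DERIV_cmult has_real_derivative_abs_powr assms)
       (auto intro!: derivative_eq_intros)
  then show ?thesis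
    using assms by (simp add: obs_potential_def[abs_def] obs_gain_def)
qed

lemma abs_obs_gain:
  assumes "c1 \<ge> 0" "c2 \<ge> 0"
  shows "\<bar>obs_gain c1 c2 e s\<bar> = c1 * \<bar>s\<bar> + c2 * \<bar>s\<bar> powr e"
proof (cases s "0::real" rule: linorder_cases)
  case less
  then have "obs_gain c1 c2 e s = - (c1 * \<bar>s\<bar> + c2 * \<bar>s\<bar> powr e)"
    by (simp add: obs_gain_def)
  then have "\<bar>obs_gain c1 c2 e s\<bar> = \<bar>c1 * \<bar>s\<bar> + c2 * \<bar>s\<bar> powr e\<bar>"
    by (metis abs_minus_cancel)
  then show ?thesis
    using assms by simp
qed (use assms in \<open>auto simp: obs_gain_def\<close>)

lemma obs_gain_power2_ge:
  assumes "c1 \<ge> 0" "c2 \<ge> 0"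
  shows "c2\<^sup>2 * \<bar>s\<bar> powr (2 * e) \<le> (obs_gain c1 c2 e s)\<^sup>2"
proof -
  have "c2 * \<bar>s\<bar> powr e \<le> \<bar>obs_gain c1 c2 e s\<bar>"
    using abs_obs_gain[OF assms] assms by simp
  then have "(c2 * \<bar>s\<bar> powr e)\<^sup>2 \<le> \<bar>obs_gain c1 c2 e s\<bar>\<^sup>2"
    using assms by (intro power_mono) auto
  moreover have "(\<bar>s\<bar> powr e)\<^sup>2 = \<bar>s\<bar> powr (2 * e)"
    by (cases "s = 0") (simp_all add: powr_power)
  ultimately show ?thesis
    by (simp add: power_mult_distrib)
qed

lemma obs_potential_nonneg: "c1 \<ge> 0 \<Longrightarrow> c2 \<ge> 0 \<Longrightarrow> e > 0 \<Longrightarrow> obs_potential c1 c2 e s \<ge> 0"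
  unfolding obs_potential_def by simp

lemma obs_potential_ge: "c2 \<ge> 0 \<Longrightarrow> e > 0 \<Longrightarrow> c1 * s\<^sup>2 / 2 \<le> obs_potential c1 c2 e s"
  unfolding obs_potential_def by simp

lemma obs_potential_le_powr:
  assumes "c1 \<ge> 0" "c2 \<ge> 0" "0 < e" "e < 1" "s\<^sup>2 \<le> B"
  shows "obs_potential c1 c2 e s \<le> (c1 * sqrt B powr (1 - e) / 2 + c2 / (1 + e)) * \<bar>s\<bar> powr (1 + e)"
proof -
  have "\<bar>s\<bar> \<le> sqrt B"
    by (rule real_le_rsqrt) (use assms(5) in simp)
  then have "\<bar>s\<bar> powr (1 - e) \<le> sqrt B powr (1 - e)"
    using assms by (intro powr_mono2) auto
  moreover have "s\<^sup>2 = \<bar>s\<bar> powr (1 + e) * \<bar>s\<bar> powr (1 - e)"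
    by (cases "s = 0") (simp_all add: powr_add[symmetric] flip: powr_realpow)
  ultimately have "s\<^sup>2 \<le> \<bar>s\<bar> powr (1 + e) * sqrt B powr (1 - e)"
    by (simp add: mult_left_mono)
  then have "c1 * s\<^sup>2 \<le> c1 * (\<bar>s\<bar> powr (1 + e) * sqrt B powr (1 - e))"
    using assms(1) by (rule mult_left_mono)
  then have "c1 * s\<^sup>2 / 2 \<le> c1 * sqrt B powr (1 - e) / 2 * \<bar>s\<bar> powr (1 + e)"
    by (simp add: mult_ac)
  then show ?thesis
    by (simp add: obs_potential_def distrib_right)
qed

section \<open>Finite-time stability\<close>

lemma continuous_on_nonneg_reals_of_derivative:
  fixes V :: "real \<Rightarrow> real"
  assumes "\<And>t. t \<ge> 0 \<Longrightarrow> \<exists>v. (V has_real_derivative v) (at t within {0..})"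
  shows "continuous_on {0..} V"
  unfolding continuous_on_eq_continuous_within
  using assms by (auto intro: DERIV_continuous)

lemma antimono_on_nonneg_reals:
  fixes V :: "real \<Rightarrow> real"
  assumes deriv: "\<And>t. t \<ge> 0 \<Longrightarrow> \<exists>v. (V has_real_derivative v) (at t within {0..}) \<and> v \<le> 0"
    and "0 \<le> s" "s \<le> t"
  shows "V t \<le> V s"
proof (rule DERIV_nonpos_imp_decreasing_open[of s t V])
  show "\<exists>v. (V has_real_derivative v) (at x) \<and> v \<le> 0" if "s < x" "x < t" for x
  proof -
    have "at x within {0..} = at x"
      using that \<open>0 \<le> s\<close> by (intro at_within_interior) auto
    then show ?thesis
      using deriv[of x] that \<open>0 \<le> s\<close> by auto
  qed
  show "continuous_on {s..t} V"
    using continuous_on_nonneg_reals_of_derivative deriv \<open>0 \<le> s\<close>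
    by (force intro: continuous_on_subset)
qed (fact \<open>s \<le> t\<close>)

text \<open>While \<open>V > 0\<close>, the function \<open>V(t)\<^bsup>q\<^esup> + q \<kappa> t\<close> does not increase.\<close>

lemma finite_time_decay_estimate:
  fixes V :: "real \<Rightarrow> real"
  assumes deriv: "\<And>t. t \<ge> 0 \<Longrightarrow> \<exists>v. (V has_real_derivative v) (at t within {0..}) \<and> v \<le> 0 \<and>
                        (V t \<le> V 0 \<longrightarrow> v \<le> - \<kappa> * V t powr (1 - q))"
    and pos: "\<And>t. 0 \<le> t \<Longrightarrow> t \<le> T \<Longrightarrow> V t > 0"
    and T: "T \<ge> 0" and q: "0 < q"
  shows "V T powr q + q * \<kappa> * T \<le> V 0 powr q"
proof -
  define W where "W t = V t powr q + q * \<kappa> * t" for t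
  have "W T \<le> W 0"
  proof (rule DERIV_nonpos_imp_decreasing_open[OF T])
    show "\<exists>w. (W has_real_derivative w) (at t) \<and> w \<le> 0" if t: "0 < t" "t < T" for t
    proof -
      obtain v where v: "(V has_real_derivative v) (at t within {0..})"
        and rate: "V t \<le> V 0 \<longrightarrow> v \<le> - \<kappa> * V t powr (1 - q)"
        using deriv[of t] t by auto
      have "at t within {0..} = at t"
        using t by (intro at_within_interior) auto
      with v have "(V has_real_derivative v) (at t)"
        by simp
      moreover have "((\<lambda>y. y powr q) has_real_derivative q * V t powr (q - 1)) (at (V t))"
        by (rule has_real_derivative_powr) (use pos t in auto)
      ultimately have "((\<lambda>t. V t powr q) has_real_derivative q * V t powr (q - 1) * v) (at t)"
        by (rule DERIV_chain')
      moreover have "((\<lambda>t. q * \<kappa> * t) has_real_derivative q * \<kappa>) (at t)"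
        by (auto intro!: derivative_eq_intros)
      ultimately have W': "(W has_real_derivative q * V t powr (q - 1) * v + q * \<kappa>) (at t)"
        unfolding W_def[abs_def] by (rule DERIV_add)
      have "V t \<le> V 0"
        using antimono_on_nonneg_reals[of V 0 t] deriv t by auto
      then have "q * V t powr (q - 1) * v \<le> q * V t powr (q - 1) * (- \<kappa> * V t powr (1 - q))"
        using rate q by (intro mult_left_mono) auto
      also have "\<dots> = - q * \<kappa>"
        using pos[of t] t by (simp add: powr_add[symmetric])
      finally show ?thesis
        using W' by auto
    qed
    have "continuous_on {0..T} V"
      using continuous_on_nonneg_reals_of_derivative deriv by (force intro: continuous_on_subset)
    then show "continuous_on {0..T} W"
      unfolding W_def using pos by (intro continuous_intros) (auto, metis less_irrefl)
  qed
  then show ?thesis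
    by (simp add: W_def)
qed

lemma finite_time_stability:
  fixes V :: "real \<Rightarrow> real"
  assumes deriv: "\<And>t. t \<ge> 0 \<Longrightarrow> \<exists>v. (V has_real_derivative v) (at t within {0..}) \<and> v \<le> 0 \<and>
                        (V t \<le> V 0 \<longrightarrow> v \<le> - \<kappa> * V t powr (1 - q))"
    and nonneg: "\<And>t. t \<ge> 0 \<Longrightarrow> V t \<ge> 0"
    and \<kappa>: "\<kappa> > 0" and q: "0 < q" "q < 1"
    and t: "t \<ge> V 0 powr q / (q * \<kappa>)"
  shows "V t = 0"
proof -
  define T where "T = V 0 powr q / (q * \<kappa>)"
  have T: "T \<ge> 0"
    unfolding T_def using \<kappa> q by simp
  have antimono: "V t \<le> V s" if "0 \<le> s" "s \<le> t" for s t
    using antimono_on_nonneg_reals[OF _ that] deriv by blast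
  have "V T = 0"
  proof (rule ccontr)
    assume "V T \<noteq> 0"
    with nonneg[OF T] have pos: "V x > 0" if "0 \<le> x" "x \<le> T" for x
      using antimono[OF that] by fastforce
    have "V T powr q + q * \<kappa> * T \<le> V 0 powr q"
      by (rule finite_time_decay_estimate[OF deriv pos T q(1)])
    moreover have "q * \<kappa> * T = V 0 powr q"
      unfolding T_def using \<kappa> q by simp
    ultimately show False
      using pos[OF T order.refl] by simp
  qed
  with antimono[OF T, of t] nonneg[of t] t T show ?thesis
    by (simp add: T_def)
qed

definition weighted_potential :: "('p::finite \<Rightarrow> real) \<Rightarrow> real \<Rightarrow> real \<Rightarrow> real \<Rightarrow> ('p \<Rightarrow> real) \<Rightarrow> real" where
  "weighted_potential w c1 c2 e s = (\<Sum>p\<in>UNIV. w p * obs_potential c1 c2 e (s p))"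

lemma weighted_potential_nonneg:
  "(\<And>p. w p \<ge> 0) \<Longrightarrow> c1 \<ge> 0 \<Longrightarrow> c2 \<ge> 0 \<Longrightarrow> e > 0 \<Longrightarrow> weighted_potential w c1 c2 e s \<ge> 0"
  unfolding weighted_potential_def by (intro sum_nonneg mult_nonneg_nonneg obs_potential_nonneg)

lemma power2_le_of_weighted_potential_le:
  assumes w: "\<And>p. wmin \<le> w p" "wmin > 0" and c: "c1 > 0" "c2 \<ge> 0" and e: "e > 0"
    and V: "weighted_potential w c1 c2 e s \<le> V0"
  shows "(s p)\<^sup>2 \<le> 2 * V0 / (c1 * wmin)"
proof -
  have w0: "0 \<le> w q" for q
    using w by (meson less_imp_le order.trans)
  then have nonneg: "w q * obs_potential c1 c2 e (s q) \<ge> 0" for q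
    using c e by (intro mult_nonneg_nonneg obs_potential_nonneg) auto
  have "wmin * (c1 * (s p)\<^sup>2 / 2) \<le> w p * obs_potential c1 c2 e (s p)"
    using w w0 c e by (intro mult_mono obs_potential_ge) auto
  also have "\<dots> \<le> weighted_potential w c1 c2 e s"
    unfolding weighted_potential_def using nonneg by (intro member_le_sum) auto
  finally have "(s p)\<^sup>2 * (c1 * wmin) \<le> 2 * V0"
    using V by (simp add: algebra_simps)
  then show ?thesis
    using c w by (simp add: pos_le_divide_eq)
qed

lemma weighted_potential_le_powr_max:
  fixes s :: "'p::finite \<Rightarrow> real"
  assumes w: "\<And>p. 0 \<le> w p" "\<And>p. w p \<le> wmax" and c: "c1 \<ge> 0" "c2 \<ge> 0" and e: "0 < e" "e < 1"
    and B: "\<And>p. (s p)\<^sup>2 \<le> B" and max: "\<And>p. \<bar>s p\<bar> \<le> \<bar>s p0\<bar>"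
  shows "weighted_potential w c1 c2 e s
           \<le> wmax * (c1 * sqrt B powr (1 - e) / 2 + c2 / (1 + e)) * real CARD('p) * \<bar>s p0\<bar> powr (1 + e)"
proof -
  define C where "C = c1 * sqrt B powr (1 - e) / 2 + c2 / (1 + e)"
  have "C \<ge> 0"
    unfolding C_def using c e by simp
  have "w p * obs_potential c1 c2 e (s p) \<le> wmax * (C * \<bar>s p0\<bar> powr (1 + e))" for p
  proof (rule mult_mono)
    have "obs_potential c1 c2 e (s p) \<le> C * \<bar>s p\<bar> powr (1 + e)"
      unfolding C_def using c e B by (rule obs_potential_le_powr)
    also have "\<dots> \<le> C * \<bar>s p0\<bar> powr (1 + e)"
      using \<open>C \<ge> 0\<close> max e by (intro mult_left_mono powr_mono2) auto
    finally show "obs_potential c1 c2 e (s p) \<le> C * \<bar>s p0\<bar> powr (1 + e)" .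
  qed (use w c e order.trans[OF w] in \<open>auto intro: obs_potential_nonneg\<close>)
  then have "weighted_potential w c1 c2 e s \<le> (\<Sum>p\<in>(UNIV::'p set). wmax * (C * \<bar>s p0\<bar> powr (1 + e)))"
    unfolding weighted_potential_def by (intro sum_mono)
  then show ?thesis
    by (simp add: C_def mult_ac)
qed

lemma weighted_potential_has_derivative:
  fixes s :: "real \<Rightarrow> 'p::finite \<Rightarrow> real"
  assumes e: "e > 0" and s: "\<And>p. ((\<lambda>t. s t p) has_real_derivative s' p) (at t within T)"
  shows "((\<lambda>t. weighted_potential w c1 c2 e (s t)) has_real_derivative
           (\<Sum>p\<in>UNIV. w p * (obs_gain c1 c2 e (s t p) * s' p))) (at t within T)"
  unfolding weighted_potential_def
  by (intro DERIV_sum DERIV_cmult DERIV_chain'[OF s has_real_derivative_obs_potential[OF e]])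

text \<open>The constant comes from \<open>G(s) \<le> C \<bar>s\<bar>\<^bsup>1+e\<^esup>\<close> on the sublevel set \<open>V \<le> V0\<close> and
  \<open>g(s)\<^sup>2 \<ge> c\<^sub>2\<^sup>2 \<bar>s\<bar>\<^bsup>2e\<^esup>\<close>, both applied to the largest component of \<open>s\<close>.\<close>

definition decay_const :: "real \<Rightarrow> real \<Rightarrow> real \<Rightarrow> real \<Rightarrow> real \<Rightarrow> nat \<Rightarrow> real \<Rightarrow> real" where
  "decay_const c1 c2 e wmin wmax m V0 =
     c2\<^sup>2 / (wmax * (c1 * sqrt (2 * V0 / (c1 * wmin)) powr (1 - e) / 2 + c2 / (1 + e)) * real m)
            powr (2 * e / (1 + e))"

lemma decay_const_pos:
  assumes "c1 \<ge> 0" "c2 > 0" "e > 0" "wmax > 0" "m > 0"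
  shows "decay_const c1 c2 e wmin wmax m V0 > 0"
proof -
  define K where "K = wmax * (c1 * sqrt (2 * V0 / (c1 * wmin)) powr (1 - e) / 2 + c2 / (1 + e)) * real m"
  have "K > 0"
    unfolding K_def using assms by (intro mult_pos_pos add_nonneg_pos) auto
  then have "K powr (2 * e / (1 + e)) > 0"
    by simp
  then show ?thesis
    unfolding decay_const_def K_def[symmetric] using assms by simp
qed

lemma decay_const_mult_powr_le_sum_obs_gain_sq:
  fixes s w :: "'p::finite \<Rightarrow> real"
  assumes w: "\<And>p. wmin \<le> w p" "\<And>p. w p \<le> wmax" "wmin > 0"
    and c: "c1 > 0" "c2 > 0" and e: "0 < e" "e < 1"
    and V: "weighted_potential w c1 c2 e s \<le> V0"
  shows "decay_const c1 c2 e wmin wmax CARD('p) V0 * weighted_potential w c1 c2 e s powr (2 * e / (1 + e))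
           \<le> (\<Sum>p\<in>UNIV. (obs_gain c1 c2 e (s p))\<^sup>2)"
proof -
  define r where "r = 2 * e / (1 + e)"
  define K where "K = wmax * (c1 * sqrt (2 * V0 / (c1 * wmin)) powr (1 - e) / 2 + c2 / (1 + e)) * real CARD('p)"
  have "Max (range (\<lambda>p. \<bar>s p\<bar>)) \<in> range (\<lambda>p. \<bar>s p\<bar>)"
    by (rule Max_in) auto
  then obtain p0 where p0: "\<bar>s p0\<bar> = Max (range (\<lambda>p. \<bar>s p\<bar>))"
    by (metis imageE)
  have max: "\<bar>s p\<bar> \<le> \<bar>s p0\<bar>" for p
    unfolding p0 by (intro Max_ge) auto
  have w0: "w p \<ge> 0" for p
    using w(1,3) order.trans less_imp_le by blast
  have "wmax > 0"
    using w by (meson less_le_trans)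
  then have K: "K > 0"
    unfolding K_def using c e by (intro mult_pos_pos add_nonneg_pos) auto
  have "weighted_potential w c1 c2 e s \<le> K * \<bar>s p0\<bar> powr (1 + e)"
    unfolding K_def using w0 w(2) c e max
    by (intro weighted_potential_le_powr_max power2_le_of_weighted_potential_le[OF w(1,3) c(1) _ e(1) V]) auto
  then have "weighted_potential w c1 c2 e s powr r \<le> (K * \<bar>s p0\<bar> powr (1 + e)) powr r"
    using w0 c e by (intro powr_mono2 weighted_potential_nonneg) (auto simp: r_def)
  also have "\<dots> = K powr r * \<bar>s p0\<bar> powr (2 * e)"
    using K e by (simp add: powr_mult powr_powr r_def)
  finally have "c2\<^sup>2 * weighted_potential w c1 c2 e s powr r \<le> K powr r * (c2\<^sup>2 * \<bar>s p0\<bar> powr (2 * e))"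
    by (metis mult_left_mono mult.left_commute zero_le_power2)
  then have "c2\<^sup>2 / K powr r * weighted_potential w c1 c2 e s powr r \<le> c2\<^sup>2 * \<bar>s p0\<bar> powr (2 * e)"
    using K by (simp add: divide_le_eq mult_ac)
  also have "\<dots> \<le> (obs_gain c1 c2 e (s p0))\<^sup>2"
    using c by (intro obs_gain_power2_ge) auto
  also have "\<dots> \<le> (\<Sum>p\<in>UNIV. (obs_gain c1 c2 e (s p))\<^sup>2)"
    by (intro member_le_sum) auto
  finally show ?thesis
    unfolding decay_const_def K_def r_def .
qed

section \<open>Matrix estimates\<close>

lemma sum_UNIV_Times:
  "(\<Sum>p\<in>(UNIV :: ('a::finite \<times> 'b::finite) set). f p) = (\<Sum>i\<in>UNIV. \<Sum>k\<in>UNIV. f (i, k))"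
  by (simp add: sum.cartesian_product flip: UNIV_Times_UNIV)

lemma diag_matrix_vector_mult_nth:
  fixes D :: "real^'m^'m"
  assumes "\<forall>i j. i \<noteq> j \<longrightarrow> D$i$j = 0"
  shows "(D *v z) $ i = D$i$i * z$i"
proof -
  have "(D *v z) $ i = (\<Sum>j\<in>UNIV. D$i$j * z$j)"
    by (simp add: matrix_vector_mult_def)
  also have "\<dots> = (\<Sum>j\<in>UNIV. if j = i then D$i$i * z$i else 0)"
    by (rule sum.cong) (use assms in auto)
  finally show ?thesis
    by simp
qed

lemma sum_power2_le_diag_weighted:
  fixes D H :: "real^'m^'m"
  assumes diag: "\<forall>i j. i \<noteq> j \<longrightarrow> D$i$j = 0"
    and lyap: "\<forall>x. x \<bullet> ((transpose H ** D + D ** H - 2 *\<^sub>R mat 1) *v x) \<ge> 0"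
  shows "(\<Sum>i\<in>UNIV. (u$i)\<^sup>2) \<le> (\<Sum>i\<in>UNIV. D$i$i * u$i * (H *v u)$i)"
proof -
  have "0 \<le> u \<bullet> ((transpose H ** D + D ** H - 2 *\<^sub>R mat 1) *v u)"
    using lyap by blast
  also have "\<dots> = u \<bullet> (transpose H *v (D *v u)) + u \<bullet> (D *v (H *v u)) - 2 * (u \<bullet> u)"
    by (simp add: matrix_vector_mult_add_rdistrib matrix_vector_mult_diff_rdistrib
        matrix_vector_mul_assoc[symmetric] scaleR_matrix_vector_assoc[symmetric]
        inner_add_right inner_diff_right)
  also have "u \<bullet> (transpose H *v (D *v u)) = (H *v u) \<bullet> (D *v u)"
    by (metis dot_lmul_matrix vector_transpose_matrix)
  also have "(H *v u) \<bullet> (D *v u) = (\<Sum>i\<in>UNIV. D$i$i * u$i * (H *v u)$i)"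
    by (simp add: inner_vec_def diag_matrix_vector_mult_nth[OF diag] mult_ac)
  also have "u \<bullet> (D *v (H *v u)) = (\<Sum>i\<in>UNIV. D$i$i * u$i * (H *v u)$i)"
    by (simp add: inner_vec_def diag_matrix_vector_mult_nth[OF diag] mult_ac)
  also have "u \<bullet> u = (\<Sum>i\<in>UNIV. (u$i)\<^sup>2)"
    by (simp add: inner_vec_def power2_eq_square)
  finally show ?thesis
    by simp
qed

text \<open>\<open>Hmat_act a b v\<close> is the stacked vector \<open>(H \<otimes> I\<^sub>n) v\<close>.\<close>

definition Hmat_act :: "('f::finite \<Rightarrow> 'f \<Rightarrow> real) \<Rightarrow> ('f \<Rightarrow> real) \<Rightarrow> ('f \<Rightarrow> real^'n) \<Rightarrow> 'f \<Rightarrow> real^'n" where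
  "Hmat_act a b v i = b i *\<^sub>R v i + (\<Sum>j\<in>UNIV. a i j *\<^sub>R (v i - v j))"

lemma yout_eq_Hmat_act: "yout a b x0 x = Hmat_act a b (\<lambda>j. x j - x0)"
  by (simp add: fun_eq_iff yout_def Hmat_act_def)

lemma Hmat_act_diff: "Hmat_act a b (\<lambda>j. v j - w j) i = Hmat_act a b v i - Hmat_act a b w i"
  by (simp add: Hmat_act_def algebra_simps sum_subtractf sum.distrib)

lemma Hmat_act_matrix_vector_mult: "Hmat_act a b (\<lambda>j. S *v v j) i = S *v Hmat_act a b v i"
  by (simp add: Hmat_act_def matrix_vector_right_distrib matrix_vector_mult_scaleR
      matrix_vector_mult_diff_distrib linear_sum[OF matrix_vector_mul_linear])

lemma Hmat_act_nth:
  fixes a :: "'f::finite \<Rightarrow> 'f \<Rightarrow> real"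
  assumes "\<forall>i. a i i = 0"
  shows "Hmat_act a b v i $ k = (Hmat a b *v (\<chi> j. v j $ k)) $ i"
proof -
  have "(Hmat a b *v (\<chi> j. v j $ k)) $ i
      = (\<Sum>j\<in>UNIV. (if i = j then b i + (\<Sum>l\<in>UNIV. a i l) else - a i j) * v j $ k)"
    by (simp add: matrix_vector_mult_def Hmat_def)
  also have "\<dots> = (\<Sum>j\<in>UNIV. (if j = i then (b i + (\<Sum>l\<in>UNIV. a i l)) * v i $ k else 0) - a i j * v j $ k)"
    by (rule sum.cong) (use assms in auto)
  also have "\<dots> = (b i + (\<Sum>l\<in>UNIV. a i l)) * v i $ k - (\<Sum>j\<in>UNIV. a i j * v j $ k)"
    by (simp add: sum_subtractf)
  also have "\<dots> = Hmat_act a b v i $ k"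
    by (simp add: Hmat_act_def right_diff_distrib sum_subtractf sum_distrib_right distrib_right)
  finally show ?thesis ..
qed

lemma sum_power2_le_diag_weighted_Hmat_act:
  fixes a :: "'f::finite \<Rightarrow> 'f \<Rightarrow> real" and D :: "real^'f^'f" and v :: "'f \<Rightarrow> real^'n"
  assumes a_diag: "\<forall>i. a i i = 0" and D_diag: "\<forall>i j. i \<noteq> j \<longrightarrow> D$i$j = 0"
    and D_lyap: "\<forall>x. x \<bullet> ((transpose (Hmat a b) ** D + D ** Hmat a b - 2 *\<^sub>R mat 1) *v x) \<ge> 0"
  shows "(\<Sum>p\<in>UNIV. (v (fst p) $ snd p)\<^sup>2)
           \<le> (\<Sum>p\<in>UNIV. D$fst p$fst p * (v (fst p) $ snd p * Hmat_act a b v (fst p) $ snd p))"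
proof -
  have "(\<Sum>i\<in>UNIV. (v i $ k)\<^sup>2) \<le> (\<Sum>i\<in>UNIV. D$i$i * (v i $ k * Hmat_act a b v i $ k))" for k
    using sum_power2_le_diag_weighted[OF D_diag D_lyap, of "\<chi> j. v j $ k"]
    by (simp add: Hmat_act_nth[of a, OF a_diag] mult_ac)
  then have "(\<Sum>k\<in>UNIV. \<Sum>i\<in>UNIV. (v i $ k)\<^sup>2)
          \<le> (\<Sum>k\<in>UNIV. \<Sum>i\<in>UNIV. D$i$i * (v i $ k * Hmat_act a b v i $ k))"
    by (meson sum_mono)
  then show ?thesis
    unfolding sum_UNIV_Times by (subst (1 2) sum.swap) simp
qed

lemma Hmat_act_eq_0_imp_eq_0:
  fixes a :: "'f::finite \<Rightarrow> 'f \<Rightarrow> real" and D :: "real^'f^'f" and v :: "'f \<Rightarrow> real^'n"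
  assumes a_diag: "\<forall>i. a i i = 0" and D_diag: "\<forall>i j. i \<noteq> j \<longrightarrow> D$i$j = 0"
    and D_lyap: "\<forall>x. x \<bullet> ((transpose (Hmat a b) ** D + D ** Hmat a b - 2 *\<^sub>R mat 1) *v x) \<ge> 0"
    and zero: "\<And>j. Hmat_act a b v j = 0"
  shows "v i = 0"
proof -
  have "(\<Sum>p\<in>UNIV. (v (fst p) $ snd p)\<^sup>2) \<le> 0"
    using sum_power2_le_diag_weighted_Hmat_act[OF a_diag D_diag D_lyap, of v] zero by simp
  then have "\<forall>p\<in>UNIV. (v (fst p) $ snd p)\<^sup>2 = 0"
    by (intro sum_nonneg_eq_0_iff[THEN iffD1] antisym sum_nonneg) auto
  then show ?thesis
    by (auto simp: vec_eq_iff)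
qed

lemma kron_diag_mult_nth:
  fixes D :: "real^'f^'f" and S :: "real^'n^'n"
  assumes diag: "\<forall>i j. i \<noteq> j \<longrightarrow> D$i$j = 0"
  shows "(kron D S *v X) $ p = D$fst p$fst p * (S *v (\<chi> l. X$(fst p, l))) $ snd p"
proof -
  obtain i k where p: "p = (i, k)"
    by (cases p)
  have "(kron D S *v X) $ p = (\<Sum>j\<in>UNIV. \<Sum>l\<in>UNIV. D$i$j * S$k$l * X$(j, l))"
    by (simp add: matrix_vector_mult_def kron_def sum_UNIV_Times p)
  also have "\<dots> = (\<Sum>j\<in>UNIV. if j = i then (\<Sum>l\<in>UNIV. D$i$i * S$k$l * X$(i, l)) else 0)"
    by (rule sum.cong) (use diag in auto)
  also have "\<dots> = D$fst p$fst p * (S *v (\<chi> l. X$(fst p, l))) $ snd p"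
    by (simp add: p matrix_vector_mult_def sum_distrib_left mult_ac)
  finally show ?thesis .
qed

lemma kron_diag_weighted_le:
  fixes D :: "real^'f^'f" and S :: "real^'n^'n" and x v :: "'f \<Rightarrow> real^'n"
  assumes D_diag: "\<forall>i j. i \<noteq> j \<longrightarrow> D$i$j = 0"
    and c1: "c1 > 0" and dominated: "\<And>i k. c1 * \<bar>x i $ k\<bar> \<le> \<bar>v i $ k\<bar>"
  shows "(\<Sum>p\<in>UNIV. D$fst p$fst p * (v (fst p) $ snd p * (S *v x (fst p)) $ snd p))
           \<le> onorm (\<lambda>z. kron D S *v z) / c1 * (\<Sum>p\<in>UNIV. (v (fst p) $ snd p)\<^sup>2)"
proof -
  define V :: "real^('f \<times> 'n)" where "V = (\<chi> p. v (fst p) $ snd p)"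
  define X :: "real^('f \<times> 'n)" where "X = (\<chi> p. x (fst p) $ snd p)"
  define L where "L = onorm (\<lambda>z. kron D S *v z)"
  have bl: "bounded_linear (\<lambda>z. kron D S *v z)"
    by (simp flip: linear_conv_bounded_linear)
  have "c1 * norm X \<le> norm V"
  proof -
    have "norm (c1 *\<^sub>R X) \<le> norm V"
      using dominated c1 by (intro norm_le_componentwise_cart) (auto simp: X_def V_def abs_mult)
    then show ?thesis
      using c1 by simp
  qed
  have "(\<Sum>p\<in>UNIV. D$fst p$fst p * (v (fst p) $ snd p * (S *v x (fst p)) $ snd p)) = V \<bullet> (kron D S *v X)"
    by (simp add: inner_vec_def kron_diag_mult_nth[OF D_diag] V_def X_def mult_ac)
  also have "\<dots> \<le> norm V * (L * norm X)"
    unfolding L_def using norm_cauchy_schwarz onorm[OF bl]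
    by (meson mult_left_mono norm_ge_zero order.trans)
  also have "\<dots> = L / c1 * (norm V * (c1 * norm X))"
    using c1 by simp
  also have "\<dots> \<le> L / c1 * (norm V * norm V)"
    using \<open>c1 * norm X \<le> norm V\<close> onorm_pos_le[OF bl] c1 by (intro mult_left_mono) (auto simp: L_def)
  also have "norm V * norm V = (\<Sum>p\<in>UNIV. (v (fst p) $ snd p)\<^sup>2)"
    by (simp flip: power2_eq_square add: power2_norm_eq_inner inner_vec_def V_def)
  finally show ?thesis
    unfolding L_def .
qed

section \<open>The Lyapunov function along observer solutions\<close>

lemma has_vector_derivative_Hmat_act:
  assumes "\<And>j. (v j has_vector_derivative v' j) F"
  shows "((\<lambda>t. Hmat_act a b (\<lambda>j. v j t) i) has_vector_derivative Hmat_act a b v' i) F"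
  unfolding Hmat_act_def
  by (intro has_vector_derivative_add has_vector_derivative_sum has_vector_derivative_diff
      bounded_linear.has_vector_derivative[OF bounded_linear_scaleR_right] assms)

lemma has_real_derivative_vec_nth:
  "(f has_vector_derivative f') F \<Longrightarrow> ((\<lambda>t. f t $ k) has_real_derivative f' $ k) F"
  unfolding has_real_derivative_iff_has_vector_derivative
  by (rule bounded_linear.has_vector_derivative[OF bounded_linear_vec_nth])

definition obs_gain_vec :: "real \<Rightarrow> real \<Rightarrow> real \<Rightarrow> real^'n \<Rightarrow> real^'n" where
  "obs_gain_vec c1 c2 e v = (\<chi> k. obs_gain c1 c2 e (v$k))"

lemma obs_gain_vec_eq: "c1 *\<^sub>R v + c2 *\<^sub>R sig e v = obs_gain_vec c1 c2 e v"
  by (simp add: vec_eq_iff obs_gain_vec_def obs_gain_def sig_def)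

lemma yout_has_vector_derivative:
  assumes sol: "observer_solution a b S c1 c2 e eta0 eta" and t: "t \<ge> 0"
  defines "y \<equiv> \<lambda>t j. yout a b (eta0 t) (\<lambda>j. eta j t) j"
  shows "((\<lambda>t. y t i) has_vector_derivative
           S *v y t i - Hmat_act a b (\<lambda>j. obs_gain_vec c1 c2 e (y t j)) i) (at t within {0..})"
proof -
  have "((\<lambda>t. eta j t - eta0 t) has_vector_derivative
          S *v (eta j t - eta0 t) - obs_gain_vec c1 c2 e (y t j)) (at t within {0..})" for j
  proof -
    have "(eta j has_vector_derivative S *v eta j t - c1 *\<^sub>R y t j - c2 *\<^sub>R sig e (y t j)) (at t within {0..})"
      and "(eta0 has_vector_derivative S *v eta0 t) (at t within {0..})"
      using sol t unfolding observer_solution_def y_def by blast+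
    then show ?thesis
      using has_vector_derivative_diff
      by (fastforce simp: matrix_vector_mult_diff_distrib algebra_simps simp flip: obs_gain_vec_eq)
  qed
  then have "((\<lambda>t. y t i) has_vector_derivative
      Hmat_act a b (\<lambda>j. S *v (eta j t - eta0 t) - obs_gain_vec c1 c2 e (y t j)) i) (at t within {0..})"
    unfolding y_def yout_eq_Hmat_act by (rule has_vector_derivative_Hmat_act)
  then show ?thesis
    by (simp add: Hmat_act_diff Hmat_act_matrix_vector_mult y_def yout_eq_Hmat_act)
qed

definition obs_lyapunov ::
  "real^'f^'f \<Rightarrow> ('f::finite \<Rightarrow> 'f \<Rightarrow> real) \<Rightarrow> ('f \<Rightarrow> real) \<Rightarrow> real \<Rightarrow> real \<Rightarrow> real \<Rightarrow>
   real^'n \<Rightarrow> ('f \<Rightarrow> real^'n) \<Rightarrow> real" where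
  "obs_lyapunov D a b c1 c2 e x0 x =
     weighted_potential (\<lambda>p. D$fst p$fst p) c1 c2 e (\<lambda>p. yout a b x0 x (fst p) $ snd p)"

lemma obs_lyapunov_eq_0_imp_eq:
  fixes a :: "'f::finite \<Rightarrow> 'f \<Rightarrow> real" and x :: "'f \<Rightarrow> real^'n"
  assumes a_diag: "\<forall>i. a i i = 0"
    and D_diag: "\<forall>i j. i \<noteq> j \<longrightarrow> D$i$j = 0" and D_pos: "\<forall>i. D$i$i > 0"
    and D_lyap: "\<forall>x. x \<bullet> ((transpose (Hmat a b) ** D + D ** Hmat a b - 2 *\<^sub>R mat 1) *v x) \<ge> 0"
    and c: "c1 > 0" "c2 \<ge> 0" and e: "e > 0"
    and zero: "obs_lyapunov D a b c1 c2 e x0 x = 0"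
  shows "x i = x0"
proof -
  have "yout a b x0 x j $ k = 0" for j k
  proof -
    have "\<forall>p\<in>UNIV. D$fst p$fst p * obs_potential c1 c2 e (yout a b x0 x (fst p) $ snd p) = 0"
      using zero D_pos c e unfolding obs_lyapunov_def weighted_potential_def
      by (subst sum_nonneg_eq_0_iff[symmetric]) (auto intro: mult_nonneg_nonneg obs_potential_nonneg less_imp_le)
    then have "obs_potential c1 c2 e (yout a b x0 x j $ k) = 0"
      using D_pos by (metis UNIV_I fst_conv snd_conv mult_eq_0_iff less_irrefl)
    then have "c1 * (yout a b x0 x j $ k)\<^sup>2 / 2 \<le> 0"
      using obs_potential_ge[OF c(2) e] by metis
    then show ?thesis
      using c by (simp add: mult_le_0_iff)
  qed
  then have "Hmat_act a b (\<lambda>j. x j - x0) j = 0" for j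
    by (simp add: vec_eq_iff flip: yout_eq_Hmat_act)
  then have "x i - x0 = 0"
    by (rule Hmat_act_eq_0_imp_eq_0[OF a_diag D_diag D_lyap])
  then show ?thesis
    by simp
qed

text \<open>The drift term is controlled through \<open>\<bar>g(s)\<bar> \<ge> c\<^sub>1 \<bar>s\<bar>\<close>, the coupling term through
  \<open>H\<^sup>T D + D H \<ge> 2 I\<close>.\<close>

lemma obs_lyapunov_dissipation:
  fixes a :: "'f::finite \<Rightarrow> 'f \<Rightarrow> real" and S :: "real^'n^'n" and D :: "real^'f^'f"
  assumes a_diag: "\<forall>i. a i i = 0" and D_diag: "\<forall>i j. i \<noteq> j \<longrightarrow> D$i$j = 0"
    and D_lyap: "\<forall>x. x \<bullet> ((transpose (Hmat a b) ** D + D ** Hmat a b - 2 *\<^sub>R mat 1) *v x) \<ge> 0"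
    and c: "c1 > 0" "c2 \<ge> 0" and e: "e > 0"
    and sol: "observer_solution a b S c1 c2 e eta0 eta" and t: "t \<ge> 0"
  defines "y \<equiv> \<lambda>t j. yout a b (eta0 t) (\<lambda>j. eta j t) j"
  shows "\<exists>v. ((\<lambda>t. obs_lyapunov D a b c1 c2 e (eta0 t) (\<lambda>j. eta j t)) has_real_derivative v) (at t within {0..}) \<and>
             v \<le> - (1 - onorm (\<lambda>z. kron D S *v z) / c1) * (\<Sum>p\<in>UNIV. (obs_gain c1 c2 e (y t (fst p) $ snd p))\<^sup>2)"
proof -
  define g where "g j = obs_gain_vec c1 c2 e (y t j)" for j
  define N where "N = (\<Sum>p\<in>UNIV. (g (fst p) $ snd p)\<^sup>2)"
  define v where "v = (\<Sum>p\<in>UNIV. D$fst p$fst p * (g (fst p) $ snd p * (S *v y t (fst p) - Hmat_act a b g (fst p)) $ snd p))"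
  have "((\<lambda>t. y t i $ k) has_real_derivative (S *v y t i - Hmat_act a b g i) $ k) (at t within {0..})" for i k
    unfolding g_def y_def by (intro has_real_derivative_vec_nth yout_has_vector_derivative[OF sol t])
  then have "((\<lambda>t. obs_lyapunov D a b c1 c2 e (eta0 t) (\<lambda>j. eta j t)) has_real_derivative v) (at t within {0..})"
    using weighted_potential_has_derivative[OF e, of "\<lambda>t p. y t (fst p) $ snd p"]
    by (simp add: obs_lyapunov_def v_def g_def obs_gain_vec_def y_def)
  moreover have "v \<le> - (1 - onorm (\<lambda>z. kron D S *v z) / c1) * N"
  proof -
    have "c1 * \<bar>y t i $ k\<bar> \<le> \<bar>g i $ k\<bar>" for i k
      using abs_obs_gain[of c1 c2 e] c by (simp add: g_def obs_gain_vec_def)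
    then have "(\<Sum>p\<in>UNIV. D$fst p$fst p * (g (fst p) $ snd p * (S *v y t (fst p)) $ snd p))
                 \<le> onorm (\<lambda>z. kron D S *v z) / c1 * N"
      unfolding N_def using D_diag c by (intro kron_diag_weighted_le)
    moreover have "N \<le> (\<Sum>p\<in>UNIV. D$fst p$fst p * (g (fst p) $ snd p * Hmat_act a b g (fst p) $ snd p))"
      unfolding N_def by (rule sum_power2_le_diag_weighted_Hmat_act[OF a_diag D_diag D_lyap])
    ultimately show ?thesis
      by (simp add: v_def algebra_simps sum_subtractf)
  qed
  ultimately show ?thesis
    by (auto simp: N_def g_def obs_gain_vec_def)
qed

lemma onorm_kron_less_imp:
  fixes D :: "real^'f::finite^'f" and S :: "real^'n^'n"
  assumes "c1 > onorm (\<lambda>z. kron D S *v z)"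
  shows "c1 > 0" "1 - onorm (\<lambda>z. kron D S *v z) / c1 > 0"
proof -
  have "onorm (\<lambda>z. kron D S *v z) \<ge> 0"
    by (intro onorm_pos_le) (simp flip: linear_conv_bounded_linear)
  with assms show "c1 > 0" "1 - onorm (\<lambda>z. kron D S *v z) / c1 > 0"
    by auto
qed

definition obs_decay_rate :: "real^'f^'f \<Rightarrow> real^'n^'n \<Rightarrow> real \<Rightarrow> real \<Rightarrow> real \<Rightarrow> real \<Rightarrow> real" where
  "obs_decay_rate D S c1 c2 e V0 =
     (1 - onorm (\<lambda>z. kron D S *v z) / c1) *
       decay_const c1 c2 e (Min (range (\<lambda>i. D$i$i))) (Max (range (\<lambda>i. D$i$i))) CARD('f \<times> 'n) V0"

lemma obs_decay_rate_pos:
  fixes D :: "real^'f::finite^'f" and S :: "real^'n^'n"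
  assumes D_pos: "\<forall>i. D$i$i > 0" and c1: "c1 > onorm (\<lambda>z. kron D S *v z)" and c2: "c2 > 0" and e: "e > 0"
  shows "obs_decay_rate D S c1 c2 e V0 > 0"
proof -
  have "D$i$i \<le> Max (range (\<lambda>i. D$i$i))" for i
    by (intro Max_ge) auto
  then have "Max (range (\<lambda>i. D$i$i)) > 0"
    using D_pos by (meson less_le_trans)
  then show ?thesis
    unfolding obs_decay_rate_def using onorm_kron_less_imp[OF c1] c2 e
    by (intro mult_pos_pos decay_const_pos) auto
qed

lemma obs_lyapunov_decay:
  fixes a :: "'f::finite \<Rightarrow> 'f \<Rightarrow> real" and S :: "real^'n^'n" and D :: "real^'f^'f"
  assumes a_diag: "\<forall>i. a i i = 0"
    and D_diag: "\<forall>i j. i \<noteq> j \<longrightarrow> D$i$j = 0" and D_pos: "\<forall>i. D$i$i > 0"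
    and D_lyap: "\<forall>x. x \<bullet> ((transpose (Hmat a b) ** D + D ** Hmat a b - 2 *\<^sub>R mat 1) *v x) \<ge> 0"
    and c1: "c1 > onorm (\<lambda>z. kron D S *v z)" and c2: "c2 > 0" and e: "0 < e" "e < 1"
    and sol: "observer_solution a b S c1 c2 e eta0 eta" and t: "t \<ge> 0"
  defines "V \<equiv> \<lambda>t. obs_lyapunov D a b c1 c2 e (eta0 t) (\<lambda>j. eta j t)"
  shows "\<exists>v. (V has_real_derivative v) (at t within {0..}) \<and> v \<le> 0 \<and>
           (V t \<le> V 0 \<longrightarrow> v \<le> - obs_decay_rate D S c1 c2 e (V 0) * V t powr (2 * e / (1 + e)))"
proof -
  define \<epsilon> where "\<epsilon> = 1 - onorm (\<lambda>z. kron D S *v z) / c1"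
  define dmin where "dmin = Min (range (\<lambda>i. D$i$i))"
  define dmax where "dmax = Max (range (\<lambda>i. D$i$i))"
  define N where "N = (\<Sum>p\<in>UNIV. (obs_gain c1 c2 e (yout a b (eta0 t) (\<lambda>j. eta j t) (fst p) $ snd p))\<^sup>2)"
  have "c1 > 0" "\<epsilon> > 0"
    using onorm_kron_less_imp[OF c1] by (simp_all add: \<epsilon>_def)
  obtain v where deriv: "(V has_real_derivative v) (at t within {0..})" and v: "v \<le> - \<epsilon> * N"
    using obs_lyapunov_dissipation[OF a_diag D_diag D_lyap \<open>c1 > 0\<close> less_imp_le[OF c2] e(1) sol t]
    unfolding V_def \<epsilon>_def N_def by blast
  have "N \<ge> 0"
    unfolding N_def by (intro sum_nonneg) simp
  with \<open>\<epsilon> > 0\<close> have dissipative: "\<epsilon> * N \<ge> 0"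
    by simp
  have dmin: "dmin > 0" "\<And>i. dmin \<le> D$i$i" and dmax: "\<And>i. D$i$i \<le> dmax"
    using D_pos Min_in[of "range (\<lambda>i. D$i$i)"] by (auto simp: dmin_def dmax_def)
  have rate: "obs_decay_rate D S c1 c2 e (V 0) * V t powr (2 * e / (1 + e)) \<le> \<epsilon> * N" if "V t \<le> V 0"
  proof -
    have "decay_const c1 c2 e dmin dmax CARD('f \<times> 'n) (V 0) * V t powr (2 * e / (1 + e)) \<le> N"
      unfolding N_def V_def obs_lyapunov_def
      by (rule decay_const_mult_powr_le_sum_obs_gain_sq)
         (use dmin dmax \<open>c1 > 0\<close> c2 e that[unfolded V_def obs_lyapunov_def] in auto)
    then show ?thesis
      unfolding obs_decay_rate_def \<epsilon>_def[symmetric] dmin_def[symmetric] dmax_def[symmetric] mult.assoc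
      using \<open>\<epsilon> > 0\<close> by (simp add: mult_left_mono)
  qed
  show ?thesis
  proof (intro exI[of _ v] conjI impI deriv)
    show "v \<le> 0"
      using v dissipative by linarith
    show "v \<le> - obs_decay_rate D S c1 c2 e (V 0) * V t powr (2 * e / (1 + e))" if "V t \<le> V 0"
      using v rate[OF that] by linarith
  qed
qed

definition obs_settling_time ::
  "real^'f^'f \<Rightarrow> real^'n^'n \<Rightarrow> ('f::finite \<Rightarrow> 'f \<Rightarrow> real) \<Rightarrow> ('f \<Rightarrow> real) \<Rightarrow> real \<Rightarrow> real \<Rightarrow> real \<Rightarrow>
   real^'n \<Rightarrow> ('f \<Rightarrow> real^'n) \<Rightarrow> real" where
  "obs_settling_time D S a b c1 c2 e x0 x =
     (let V0 = obs_lyapunov D a b c1 c2 e x0 x; q = (1 - e) / (1 + e)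
      in V0 powr q / (q * obs_decay_rate D S c1 c2 e V0))"

lemma obs_settling_time_nonneg:
  fixes D :: "real^'f::finite^'f" and S :: "real^'n^'n"
  assumes "\<forall>i. D$i$i > 0" "c1 > onorm (\<lambda>z. kron D S *v z)" "c2 > 0" "0 < e" "e < 1"
  shows "obs_settling_time D S a b c1 c2 e x0 x \<ge> 0"
  unfolding obs_settling_time_def Let_def
  using obs_decay_rate_pos[OF assms(1-4)] assms(4,5) by (intro divide_nonneg_pos mult_pos_pos) auto

lemma observer_solution_settles:
  fixes a :: "'f::finite \<Rightarrow> 'f \<Rightarrow> real" and S :: "real^'n^'n" and D :: "real^'f^'f"
  assumes a_diag: "\<forall>i. a i i = 0"
    and D_diag: "\<forall>i j. i \<noteq> j \<longrightarrow> D$i$j = 0" and D_pos: "\<forall>i. D$i$i > 0"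
    and D_lyap: "\<forall>x. x \<bullet> ((transpose (Hmat a b) ** D + D ** Hmat a b - 2 *\<^sub>R mat 1) *v x) \<ge> 0"
    and c1: "c1 > onorm (\<lambda>z. kron D S *v z)" and c2: "c2 > 0" and e: "0 < e" "e < 1"
    and sol: "observer_solution a b S c1 c2 e eta0 eta"
    and t: "t \<ge> obs_settling_time D S a b c1 c2 e (eta0 0) (\<lambda>j. eta j 0)"
  shows "eta i t = eta0 t"
proof -
  define V where "V t = obs_lyapunov D a b c1 c2 e (eta0 t) (\<lambda>j. eta j t)" for t
  define q where "q = (1 - e) / (1 + e)"
  have q: "0 < q" "q < 1" "1 - q = 2 * e / (1 + e)"
    using e by (auto simp: q_def field_simps)
  have "c1 > 0"
    by (rule onorm_kron_less_imp(1)[OF c1])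
  have "V t = 0"
  proof (rule finite_time_stability[where V = V, OF _ _ obs_decay_rate_pos[OF D_pos c1 c2 e(1), of "V 0"] q(1,2)])
    show "\<exists>v. (V has_real_derivative v) (at s within {0..}) \<and> v \<le> 0 \<and>
            (V s \<le> V 0 \<longrightarrow> v \<le> - obs_decay_rate D S c1 c2 e (V 0) * V s powr (1 - q))" if "s \<ge> 0" for s
      unfolding q(3) V_def by (rule obs_lyapunov_decay[OF a_diag D_diag D_pos D_lyap c1 c2 e sol that])
    show "V s \<ge> 0" for s
      unfolding V_def obs_lyapunov_def using D_pos \<open>c1 > 0\<close> c2 e
      by (intro weighted_potential_nonneg) (auto simp: less_imp_le)
    show "t \<ge> V 0 powr q / (q * obs_decay_rate D S c1 c2 e (V 0))"
      using t by (simp add: obs_settling_time_def Let_def V_def q_def)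
  qed
  then show ?thesis
    using obs_lyapunov_eq_0_imp_eq[OF a_diag D_diag D_pos D_lyap \<open>c1 > 0\<close> less_imp_le[OF c2] e(1)]
    by (simp add: V_def)
qed

lemma observer_solution_error_continuous:
  assumes "observer_solution a b S c1 c2 e eta0 eta" "t \<ge> 0"
  shows "continuous (at t within {0..}) (\<lambda>s. eta i s - eta0 s)"
proof -
  have "continuous (at t within {0..}) (eta i)" "continuous (at t within {0..}) eta0"
    using assms unfolding observer_solution_def by (meson has_vector_derivative_continuous)+
  then show ?thesis
    by (rule continuous_diff)
qed

theorem mainTheorem2:
  fixes a :: "'f::finite \<Rightarrow> 'f \<Rightarrow> real" and b :: "'f \<Rightarrow> real"
    and S :: "real^'n^'n" and D :: "real^'f^'f"
    and c1 c2 e :: real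
  assumes a_nonneg: "\<forall>i j. a i j \<ge> 0" and a_diag: "\<forall>i. a i i = 0" and b_nonneg: "\<forall>i. b i \<ge> 0"
    and tree: "has_spanning_tree_from_leader a b"
    and e: "0 < e" "e < 1"
    and D_diag: "\<forall>i j. i \<noteq> j \<longrightarrow> D$i$j = 0" and D_pos: "\<forall>i. D$i$i > 0"
    and D_lyap: "\<forall>x. x \<bullet> ((transpose (Hmat a b) ** D + D ** Hmat a b - 2 *\<^sub>R mat 1) *v x) \<ge> 0"
    and c1: "c1 > onorm (\<lambda>x. kron D S *v x)"
    and c2: "c2 > 0"
  shows "\<exists>T1 :: real^'n \<Rightarrow> ('f \<Rightarrow> real^'n) \<Rightarrow> real.
           (\<forall>x0 x. T1 x0 x \<ge> 0) \<and>
           (\<forall>eta0 eta. observer_solution a b S c1 c2 e eta0 eta \<longrightarrow>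
              (\<forall>i. ((\<lambda>t. eta i t - eta0 t) \<longlongrightarrow> 0) (at (T1 (eta0 0) (\<lambda>j. eta j 0)) within {0..}) \<and>
                   (\<forall>t\<ge>T1 (eta0 0) (\<lambda>j. eta j 0). eta i t - eta0 t = 0)))"
proof (intro exI[of _ "obs_settling_time D S a b c1 c2 e"] conjI allI impI)
  show nonneg: "obs_settling_time D S a b c1 c2 e x0 x \<ge> 0" for x0 x
    using D_pos c1 c2 e by (rule obs_settling_time_nonneg)
  show settled: "eta i t - eta0 t = 0"
    if "observer_solution a b S c1 c2 e eta0 eta"
      and "t \<ge> obs_settling_time D S a b c1 c2 e (eta0 0) (\<lambda>j. eta j 0)" for eta0 eta i t
    using observer_solution_settles[OF a_diag D_diag D_pos D_lyap c1 c2 e that] by simp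
  show "((\<lambda>t. eta i t - eta0 t) \<longlongrightarrow> 0) (at (obs_settling_time D S a b c1 c2 e (eta0 0) (\<lambda>j. eta j 0)) within {0..})"
    if sol: "observer_solution a b S c1 c2 e eta0 eta" for eta0 eta i
    using observer_solution_error_continuous[OF sol nonneg[of "eta0 0" "\<lambda>j. eta j 0"]] settled[OF sol order.refl]
    by (simp add: continuous_within)
qed

end
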